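(* Let $F=\{f_i\}_{i=1}^N$ be a tight frame for $\mathcal H$. Suppose there exist a dual pair $(F',G')\in\mathcal F^{(1)}$ and a constant $c$ with $\operatorname{Re}\big(\langle g'_i,g'_j\rangle\langle f'_j,f'_i\rangle\big)=c$ for all $i\neq j$. Then $(F,S_F^{-1}F)\in\mathcal F^{(m)}$ for every $m\in\{1,2,\dots,N\}$ if and only if $(F,S_F^{-1}F)$ is a $2$-uniform dual pair, and this holds if and only if $F$ is an equiangular frame.
   Context: $\mathcal H$ is a complex Hilbert space of finite dimension $n$, inner product linear in the first argument, $N\ge n$. A finite sequence $F=\{f_i\}_{i=1}^N$ is a frame if there are $0<A\le B$ with $A\|f\|^2\le\sum_i|\langle f,f_i\rangle|^2\le B\|f\|^2$ for all $f$; tight if one can take $A=B$; equal norm if $\|f_i\|$ is constant; equiangular if it is equal norm and $|\langle f_i,f_j\rangle|$ is the same constant for all $i\ne j$. $S_Ff=\sum_i\langle f,f_i\rangle f_i$; $S_F^{-1}F=\{S_F^{-1}f_i\}$ is the canonical dual. $G=\{g_i\}_{i=1}^N$ is a dual of $F$ if $f=\sum_i\langle f,g_i\rangle f_i$ for all $f$; $(F,G)$ is then an $(N,n)$ dual pair. A dual pair is $1$-uniform if $\langle f_i,g_i\rangle$ is independent of $i$, and $2$-uniform if it is $1$-uniform and $\langle f_i,g_j\rangle\langle f_j,g_i\rangle$ is the same constant for all $i\ne j$. $\mathcal A_m$ is the set of $m$-element subsets of $\{1,\dots,N\}$; $E_{\Lambda,F,G}f=\sum_{i\in\Lambda}\langle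 f,f_i\rangle g_i$. With $\|T\|_{\mathcal F}=\sqrt{\operatorname{tr}(T^*T)}$: $\epsilon^{(m)}_{F,G}=\max_{\Lambda\in\mathcal A_m}\|E_{\Lambda,F,G}\|_{\mathcal F}$; $\epsilon^{(1)}=\inf\{\epsilon^{(1)}_{F,G}:(F,G)\text{ an }(N,n)\text{ dual pair}\}$; $\mathcal F^{(1)}=\{(F,G):\epsilon^{(1)}_{F,G}=\epsilon^{(1)}\}$; for $m>1$, $\epsilon^{(m)}=\inf\{\epsilon^{(m)}_{F,G}:(F,G)\in\mathcal F^{(m-1)}\}$, $\mathcal F^{(m)}=\{(F,G)\in\mathcal F^{(m-1)}:\epsilon^{(m)}_{F,G}=\epsilon^{(m)}\}$. *)

theory Defs
  imports "HOL-Analysis.Analysis"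
begin

text \<open>The n-dimensional complex Hilbert space is modelled as complex ^ 'n
  (n = CARD('n)), with inner product linear in the first argument.
  Frames are sequences indexed by {1..N}, modelled as functions nat => complex^'n
  (values outside {1..N} are irrelevant).\<close>

type_synonym 'n cvec = "complex ^ 'n"

definition cinner :: "complex ^ 'n \<Rightarrow> complex ^ 'n \<Rightarrow> complex" where
  "cinner x y = (\<Sum>k\<in>UNIV. x $ k * cnj (y $ k))"

definition cnorm :: "complex ^ 'n \<Rightarrow> real" where
  "cnorm x = sqrt (Re (cinner x x))"

definition frame :: "nat \<Rightarrow> (nat \<Rightarrow> complex ^ 'n) \<Rightarrow> bool" where
  "frame N F \<longleftrightarrow> (\<exists>A B. 0 < A \<and> A \<le> B \<and>
     (\<forall>f. A * (cnorm f)^2 \<le> (\<Sum>i\<in>{1..N}. (cmod (cinner f (F i)))^2) \<and>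
          (\<Sum>i\<in>{1..N}. (cmod (cinner f (F i)))^2) \<le> B * (cnorm f)^2))"

definition tight_frame :: "nat \<Rightarrow> (nat \<Rightarrow> complex ^ 'n) \<Rightarrow> bool" where
  "tight_frame N F \<longleftrightarrow> (\<exists>A. 0 < A \<and>
     (\<forall>f. (\<Sum>i\<in>{1..N}. (cmod (cinner f (F i)))^2) = A * (cnorm f)^2))"

definition equal_norm :: "nat \<Rightarrow> (nat \<Rightarrow> complex ^ 'n) \<Rightarrow> bool" where
  "equal_norm N F \<longleftrightarrow> (\<exists>a. \<forall>i\<in>{1..N}. cnorm (F i) = a)"

definition equiangular :: "nat \<Rightarrow> (nat \<Rightarrow> complex ^ 'n) \<Rightarrow> bool" where
  "equiangular N F \<longleftrightarrow> equal_norm N F \<and>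
     (\<exists>b. \<forall>i\<in>{1..N}. \<forall>j\<in>{1..N}. i \<noteq> j \<longrightarrow> cmod (cinner (F i) (F j)) = b)"

definition frame_op :: "nat \<Rightarrow> (nat \<Rightarrow> complex ^ 'n) \<Rightarrow> complex ^ 'n \<Rightarrow> complex ^ 'n" where
  "frame_op N F f = (\<Sum>i\<in>{1..N}. cinner f (F i) *s F i)"

definition canon_dual :: "nat \<Rightarrow> (nat \<Rightarrow> complex ^ 'n) \<Rightarrow> nat \<Rightarrow> complex ^ 'n" where
  "canon_dual N F i = inv (frame_op N F) (F i)"

definition dual_pair :: "nat \<Rightarrow> (nat \<Rightarrow> complex ^ 'n) \<Rightarrow> (nat \<Rightarrow> complex ^ 'n) \<Rightarrow> bool" where
  "dual_pair N F G \<longleftrightarrow> frame N F \<and>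
     (\<forall>f. f = (\<Sum>i\<in>{1..N}. cinner f (G i) *s F i))"

definition one_uniform :: "nat \<Rightarrow> (nat \<Rightarrow> complex ^ 'n) \<Rightarrow> (nat \<Rightarrow> complex ^ 'n) \<Rightarrow> bool" where
  "one_uniform N F G \<longleftrightarrow> (\<exists>c. \<forall>i\<in>{1..N}. cinner (F i) (G i) = c)"

definition two_uniform :: "nat \<Rightarrow> (nat \<Rightarrow> complex ^ 'n) \<Rightarrow> (nat \<Rightarrow> complex ^ 'n) \<Rightarrow> bool" where
  "two_uniform N F G \<longleftrightarrow> dual_pair N F G \<and> one_uniform N F G \<and>
     (\<exists>d. \<forall>i\<in>{1..N}. \<forall>j\<in>{1..N}. i \<noteq> j \<longrightarrow> cinner (F i) (G j) * cinner (F j) (G i) = d)"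

text \<open>Erasure operator and its Frobenius (Hilbert-Schmidt) norm, computed in the
  standard orthonormal basis: sqrt (tr (T* T)) = sqrt (sum_k |T e_k|^2).\<close>
definition erasure :: "nat set \<Rightarrow> (nat \<Rightarrow> complex ^ 'n) \<Rightarrow> (nat \<Rightarrow> complex ^ 'n) \<Rightarrow> complex ^ 'n \<Rightarrow> complex ^ 'n" where
  "erasure L F G f = (\<Sum>i\<in>L. cinner f (F i) *s G i)"

definition frob_norm :: "(complex ^ 'n \<Rightarrow> complex ^ 'n) \<Rightarrow> real" where
  "frob_norm T = sqrt (\<Sum>k\<in>UNIV. (cnorm (T (axis k 1)))^2)"

definition eps :: "nat \<Rightarrow> nat \<Rightarrow> (nat \<Rightarrow> complex ^ 'n) \<Rightarrow> (nat \<Rightarrow> complex ^ 'n) \<Rightarrow> real" where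
  "eps N m F G = Max {frob_norm (erasure L F G) | L. L \<subseteq> {1..N} \<and> card L = m}"

text \<open>optimal_fam N 0 = all (N,n) dual pairs; optimal_fam N m = F^(m) for m >= 1.\<close>
primrec optimal_fam :: "nat \<Rightarrow> nat \<Rightarrow> ((nat \<Rightarrow> complex ^ 'n) \<times> (nat \<Rightarrow> complex ^ 'n)) set" where
  "optimal_fam N 0 = {(F, G). dual_pair N F G}"
| "optimal_fam N (Suc m) = {(F, G) \<in> optimal_fam N m.
      eps N (Suc m) F G = Inf ((\<lambda>(F', G'). eps N (Suc m) F' G') ` optimal_fam N m)}"

end

theory Submission
  imports Defs
begin

text \<open>For a dual pair the trace identity \<open>\<Sum>i. \<langle>f i, g i\<rangle> = n\<close> and Cauchy-Schwarz give
  \<open>eps\<^sup>(\<^sup>1\<^sup>) \<ge> n/N\<close>, with equality iff \<open>\<parallel>f i\<parallel> \<parallel>g i\<parallel> = n/N\<close> for every i; a harmonic frame attains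
  it. For pairs in the first optimal family the two-element erasures satisfy
  \<open>\<parallel>E{i,j}\<parallel>\<^sup>2 = 2 (n/N)\<^sup>2 + 2 Re (\<langle>g i, g j\<rangle> \<langle>f j, f i\<rangle>)\<close>, and these cross terms always sum to
  \<open>n - n\<^sup>2/N\<close>, because the erasure of all N vectors is the identity. So the worst two-element
  erasure is smallest exactly when all cross terms are equal, which the assumed pair shows to be
  possible; all erasure norms are then determined, so the optimal families stabilise from \<open>m = 2\<close>
  on. For a tight frame with bound A the canonical dual is \<open>F/A\<close>, and optimality, 2-uniformity
  and equiangularity all reduce to equal norms together with constant \<open>|\<langle>f i, f j\<rangle>|\<close>.\<close>

lemma eq_const_if_le_and_sum_ge:
  fixes f :: "'a \<Rightarrow> real"
  assumes "finite A" "\<And>x. x \<in> A \<Longrightarrow> f x \<le> c" "(\<Sum>x\<in>A. c) \<le> (\<Sum>x\<in>A. f x)" "x \<in> A"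
  shows "f x = c"
proof -
  have "(\<Sum>x\<in>A. c - f x) \<le> 0" using assms(3) by (simp add: sum_subtractf)
  moreover have "(\<Sum>x\<in>A. c - f x) \<ge> 0" using assms(2) by (simp add: sum_nonneg)
  ultimately have "(\<Sum>x\<in>A. c - f x) = 0" by simp
  then show ?thesis
    using assms(1,2,4) by (subst (asm) sum_nonneg_eq_0_iff) auto
qed

lemma ex_ge_if_sum_eq:
  fixes f :: "'a \<Rightarrow> real"
  assumes "finite A" "A \<noteq> {}" "(\<Sum>x\<in>A. f x) = (\<Sum>x\<in>A. c)"
  shows "\<exists>x\<in>A. c \<le> f x"
  using sum_strict_mono[OF assms(1,2), of f "\<lambda>_. c"] assms(3) by force

lemma ex_const_comp_inj_iff:
  assumes "inj_on \<phi> D" "\<forall>i\<in>I. h i \<in> D"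
  shows "(\<exists>c. \<forall>i\<in>I. \<phi> (h i) = c) \<longleftrightarrow> (\<exists>c. \<forall>i\<in>I. h i = c)"
proof
  assume "\<exists>c. \<forall>i\<in>I. \<phi> (h i) = c"
  then obtain c where c: "\<forall>i\<in>I. \<phi> (h i) = c" by blast
  show "\<exists>c. \<forall>i\<in>I. h i = c"
  proof (cases "I = {}")
    case False
    then obtain i0 where "i0 \<in> I" by blast
    then have "h i = h i0" if "i \<in> I" for i
      using c that assms inj_onD[OF assms(1), of "h i" "h i0"] by auto
    then show ?thesis by blast
  qed simp
qed auto

section \<open>The inner product on \<open>complex ^ 'n\<close>\<close>

lemma cinner_commute: "cinner y x = cnj (cinner x y)"
  by (simp add: cinner_def mult.commute)

lemma cinner_add_left: "cinner (x + y) z = cinner x z + cinner y z"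
  by (simp add: cinner_def distrib_right sum.distrib)

lemma cinner_add_right: "cinner x (y + z) = cinner x y + cinner x z"
  by (simp add: cinner_def distrib_left sum.distrib)

lemma cinner_diff_left: "cinner (x - y) z = cinner x z - cinner y z"
  by (simp add: cinner_def left_diff_distrib sum_subtractf)

lemma cinner_scaleC_left: "cinner (c *s x) z = c * cinner x z"
  by (simp add: cinner_def sum_distrib_left mult.assoc)

lemma cinner_scaleC_right: "cinner x (c *s z) = cnj c * cinner x z"
  by (simp add: cinner_def sum_distrib_left mult.assoc mult.left_commute)

lemma cinner_sum_left: "cinner (\<Sum>i\<in>A. f i) z = (\<Sum>i\<in>A. cinner (f i) z)"
  unfolding cinner_def sum_component sum_distrib_right by (rule sum.swap)

lemma cinner_sum_right: "cinner z (\<Sum>i\<in>A. f i) = (\<Sum>i\<in>A. cinner z (f i))"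
  unfolding cinner_def sum_component cnj_sum sum_distrib_left by (rule sum.swap)

lemma cinner_self: "cinner x x = complex_of_real (\<Sum>k\<in>UNIV. (cmod (x $ k))^2)"
  by (simp add: cinner_def flip: complex_norm_square)

lemma cinner_self_nonneg: "0 \<le> Re (cinner x x)"
  by (simp add: cinner_self sum_nonneg)

lemma cinner_self_real: "cinner x x = complex_of_real (Re (cinner x x))"
  by (simp add: cinner_self)

lemma cinner_self_eq_0: "cinner x x = 0 \<longleftrightarrow> x = 0"
proof
  assume "cinner x x = 0"
  then have "(\<Sum>k\<in>UNIV. (cmod (x $ k))^2) = 0"
    by (simp only: cinner_self of_real_eq_0_iff)
  then show "x = 0"
    by (simp add: vec_eq_iff sum_nonneg_eq_0_iff)
qed (simp add: cinner_def)

lemma cinner_scaleC_self: "Re (cinner (c *s x) (c *s x)) = (cmod c)^2 * Re (cinner x x)"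
proof -
  have "cinner (c *s x) (c *s x) = complex_of_real ((cmod c)^2) * cinner x x"
    by (simp add: cinner_scaleC_left cinner_scaleC_right mult.assoc mult.commute[of "cnj c"]
        flip: complex_norm_square)
  then show ?thesis by simp
qed

lemma cinner_axis_left: "cinner (axis k 1) y = cnj (y $ k)"
proof -
  have "(if l = k then 1 else 0) * cnj (y $ l) = (if l = k then cnj (y $ k) else 0)" for l
    by simp
  then show ?thesis by (simp add: cinner_def axis_def)
qed

lemma cnorm_sq: "(cnorm x)^2 = Re (cinner x x)"
  by (simp add: cnorm_def cinner_self_nonneg)

lemma cnorm_eq_norm: "cnorm x = norm x"
  by (simp add: cnorm_def cinner_self norm_vec_def L2_set_def)

lemma cmod_cinner_le: "cmod (cinner x y) \<le> cnorm x * cnorm y"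
proof -
  have "cmod (cinner x y) \<le> (\<Sum>k\<in>UNIV. \<bar>cmod (x $ k)\<bar> * \<bar>cmod (y $ k)\<bar>)"
    unfolding cinner_def by (rule order_trans[OF norm_sum]) (simp add: norm_mult)
  also have "\<dots> \<le> L2_set (\<lambda>k. cmod (x $ k)) UNIV * L2_set (\<lambda>k. cmod (y $ k)) UNIV"
    by (rule L2_set_mult_ineq)
  finally show ?thesis
    by (simp add: cnorm_eq_norm norm_vec_def)
qed

lemma vec_scaleC_sum:
  fixes c :: complex and v :: "'a \<Rightarrow> complex ^ 'n"
  shows "(\<Sum>i\<in>A. (c * x i) *s v i) = c *s (\<Sum>i\<in>A. x i *s v i)"
  by (induction A rule: infinite_finite_induct) simp_all

section \<open>Erasure errors\<close>

definition erasure_hs :: "nat set \<Rightarrow> (nat \<Rightarrow> complex ^ 'n) \<Rightarrow> (nat \<Rightarrow> complex ^ 'n) \<Rightarrow> complex" where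
  "erasure_hs L F G = (\<Sum>i\<in>L. \<Sum>j\<in>L. cinner (F j) (F i) * cinner (G i) (G j))"

lemma frob_norm_erasure: "frob_norm (erasure L F G) = sqrt (Re (erasure_hs L F G))"
proof -
  let ?E = "erasure L F G"
  have E: "?E (axis k 1) = (\<Sum>i\<in>L. cnj (F i $ k) *s G i)" for k
    by (simp add: erasure_def cinner_axis_left)
  have C: "cinner (?E (axis k 1)) (?E (axis k 1))
      = (\<Sum>i\<in>L. \<Sum>j\<in>L. (F j $ k * cnj (F i $ k)) * cinner (G i) (G j))" for k
    unfolding E cinner_sum_left cinner_scaleC_left cinner_sum_right cinner_scaleC_right
    by (simp add: sum_distrib_left mult_ac) (rule sum.swap)
  have "(\<Sum>k\<in>UNIV. cinner (?E (axis k 1)) (?E (axis k 1)))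
      = (\<Sum>i\<in>L. \<Sum>j\<in>L. (\<Sum>k\<in>UNIV. F j $ k * cnj (F i $ k)) * cinner (G i) (G j))"
    unfolding C sum_distrib_right
    by (subst sum.swap, rule sum.cong, simp, subst sum.swap, simp)
  also have "\<dots> = erasure_hs L F G"
    by (simp add: erasure_hs_def cinner_def)
  finally have "(\<Sum>k\<in>UNIV. (cnorm (?E (axis k 1)))^2) = Re (erasure_hs L F G)"
    by (simp add: cnorm_sq flip: Re_sum)
  then show ?thesis by (simp add: frob_norm_def)
qed

definition diag_term :: "(nat \<Rightarrow> complex ^ 'n) \<Rightarrow> (nat \<Rightarrow> complex ^ 'n) \<Rightarrow> nat \<Rightarrow> real" where
  "diag_term F G i = Re (cinner (F i) (F i)) * Re (cinner (G i) (G i))"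

definition cross_term :: "(nat \<Rightarrow> complex ^ 'n) \<Rightarrow> (nat \<Rightarrow> complex ^ 'n) \<Rightarrow> nat \<Rightarrow> nat \<Rightarrow> real" where
  "cross_term F G i j = Re (cinner (G i) (G j) * cinner (F j) (F i))"

lemma cross_term_commute: "cross_term F G i j = cross_term F G j i"
proof -
  have "cinner (G j) (G i) * cinner (F i) (F j) = cnj (cinner (G i) (G j) * cinner (F j) (F i))"
    by (simp add: cinner_commute[of "G i"] cinner_commute[of "F j"])
  then show ?thesis unfolding cross_term_def by simp
qed

lemma diag_term_nonneg: "0 \<le> diag_term F G i"
  by (simp add: diag_term_def cinner_self_nonneg)

lemma sqrt_diag_term: "sqrt (diag_term F G i) = cnorm (F i) * cnorm (G i)"
  by (simp add: diag_term_def cnorm_def real_sqrt_mult)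

lemma Re_cinner_le_sqrt_diag_term: "Re (cinner (F i) (G i)) \<le> sqrt (diag_term F G i)"
  unfolding sqrt_diag_term using cmod_cinner_le complex_Re_le_cmod order_trans by blast

lemma Re_erasure_hs:
  assumes "finite L"
  shows "Re (erasure_hs L F G) = (\<Sum>i\<in>L. diag_term F G i) + (\<Sum>i\<in>L. \<Sum>j\<in>L-{i}. cross_term F G i j)"
proof -
  have "erasure_hs L F G = (\<Sum>i\<in>L. cinner (F i) (F i) * cinner (G i) (G i)
      + (\<Sum>j\<in>L-{i}. cinner (F j) (F i) * cinner (G i) (G j)))"
    unfolding erasure_hs_def by (rule sum.cong[OF refl], subst sum.remove[OF assms]) auto
  moreover have "Re (cinner (F i) (F i) * cinner (G i) (G i)) = diag_term F G i" for i
    by (subst cinner_self_real, subst (2) cinner_self_real) (simp add: diag_term_def)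
  moreover have "Re (cinner (F j) (F i) * cinner (G i) (G j)) = cross_term F G i j" for i j
    by (simp add: cross_term_def mult.commute)
  ultimately show ?thesis
    by (simp add: sum.distrib)
qed

lemma Re_erasure_hs_singleton: "Re (erasure_hs {i} F G) = diag_term F G i"
  using Re_erasure_hs[of "{i}" F G] by simp

lemma Re_erasure_hs_doubleton:
  "i \<noteq> j \<Longrightarrow> Re (erasure_hs {i, j} F G) = diag_term F G i + diag_term F G j + 2 * cross_term F G i j"
  using Re_erasure_hs[of "{i, j}" F G] cross_term_commute[of F G j i] by (simp add: insert_Diff_if)

lemma eps_eq_Max: "eps N m F G = Max ((\<lambda>L. sqrt (Re (erasure_hs L F G))) ` {L. L \<subseteq> {1..N} \<and> card L = m})"
  unfolding eps_def frob_norm_erasure by (rule arg_cong[where f = Max]) auto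

lemma finite_subsets_card: "finite {L. L \<subseteq> {1..N::nat} \<and> card L = m}"
  by (rule finite_subset[of _ "Pow {1..N}"]) auto

lemma eps_ge: "L \<subseteq> {1..N} \<Longrightarrow> card L = m \<Longrightarrow> sqrt (Re (erasure_hs L F G)) \<le> eps N m F G"
  unfolding eps_eq_Max by (rule Max_ge) (auto simp: finite_subsets_card)

lemma eps_le:
  assumes "L0 \<subseteq> {1..N}" "card L0 = m"
    and "\<And>L. L \<subseteq> {1..N} \<Longrightarrow> card L = m \<Longrightarrow> sqrt (Re (erasure_hs L F G)) \<le> v"
  shows "eps N m F G \<le> v"
  unfolding eps_eq_Max using assms by (subst Max_le_iff) (auto simp: finite_subsets_card)

lemma eps_cong_terms:
  assumes "\<And>i. i \<in> {1..N} \<Longrightarrow> diag_term F G i = diag_term F' G' i"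
    and "\<And>i j. i \<in> {1..N} \<Longrightarrow> j \<in> {1..N} \<Longrightarrow> i \<noteq> j \<Longrightarrow> cross_term F G i j = cross_term F' G' i j"
  shows "eps N m F G = eps N m F' G'"
proof -
  have "Re (erasure_hs L F G) = Re (erasure_hs L F' G')" if "L \<subseteq> {1..N}" for L
  proof -
    have "finite L" using that by (rule finite_subset) simp
    then show ?thesis
      using that unfolding Re_erasure_hs[OF \<open>finite L\<close>]
      by (intro arg_cong2[where f = "(+)"] sum.cong refl) (use assms in \<open>blast+\<close>)
  qed
  then show ?thesis
    unfolding eps_eq_Max by (intro arg_cong[where f = Max] image_cong) auto
qed

section \<open>Dual pairs and the first optimal family\<close>

lemma dual_pair_expansion: "dual_pair N F G \<Longrightarrow> f = (\<Sum>i\<in>{1..N}. cinner f (G i) *s F i)"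
  unfolding dual_pair_def by blast

lemma dual_pair_trace:
  fixes F :: "nat \<Rightarrow> complex ^ 'n"
  assumes "dual_pair N F G"
  shows "(\<Sum>i\<in>{1..N}. cinner (F i) (G i)) = of_nat CARD('n)"
proof -
  have "1 = (\<Sum>i\<in>{1..N}. F i $ k * cnj (G i $ k))" for k :: 'n
    using arg_cong[OF dual_pair_expansion[OF assms, of "axis k 1"], of "\<lambda>v. v $ k"]
    by (simp add: cinner_axis_left mult.commute)
  then have "(\<Sum>k\<in>(UNIV::'n set). 1) = (\<Sum>k\<in>UNIV. \<Sum>i\<in>{1..N}. F i $ k * cnj (G i $ k))"
    by simp
  also have "\<dots> = (\<Sum>i\<in>{1..N}. cinner (F i) (G i))"
    unfolding cinner_def by (rule sum.swap)
  finally show ?thesis by simp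
qed

lemma dual_pair_Re_erasure_hs_all:
  fixes F :: "nat \<Rightarrow> complex ^ 'n"
  assumes "dual_pair N F G"
  shows "Re (erasure_hs {1..N} F G) = real CARD('n)"
proof -
  have "erasure_hs {1..N} F G = (\<Sum>j\<in>{1..N}. cinner (F j) (\<Sum>i\<in>{1..N}. cinner (G j) (G i) *s F i))"
    unfolding erasure_hs_def cinner_sum_right cinner_scaleC_right
    by (subst sum.swap, intro sum.cong refl, subst cinner_commute[of "G _"]) (simp add: mult.commute)
  also have "\<dots> = (\<Sum>j\<in>{1..N}. cinner (F j) (G j))"
    using dual_pair_expansion[OF assms] by simp
  finally show ?thesis
    using dual_pair_trace[OF assms] by simp
qed

lemma dual_pair_eps_1_ge:
  fixes F :: "nat \<Rightarrow> complex ^ 'n"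
  assumes "dual_pair N F G" "1 \<le> N"
  shows "real CARD('n) / real N \<le> eps N 1 F G"
proof -
  have "real CARD('n) = (\<Sum>i\<in>{1..N}. Re (cinner (F i) (G i)))"
    using dual_pair_trace[OF assms(1)] by (simp flip: Re_sum)
  also have "\<dots> \<le> (\<Sum>i\<in>{1..N}. sqrt (diag_term F G i))"
    by (rule sum_mono, rule Re_cinner_le_sqrt_diag_term)
  also have "\<dots> \<le> (\<Sum>i\<in>{1..N}. eps N 1 F G)"
    by (rule sum_mono) (use eps_ge[of "{_}" N 1 F G] in \<open>simp add: Re_erasure_hs_singleton\<close>)
  finally show ?thesis
    using assms(2) by (simp add: field_simps)
qed

lemma frame_op_cinner_self:
  "cinner (frame_op N F f) f = complex_of_real (\<Sum>i\<in>{1..N}. (cmod (cinner f (F i)))^2)"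
proof -
  have "cinner (frame_op N F f) f = (\<Sum>i\<in>{1..N}. cinner f (F i) * cnj (cinner f (F i)))"
    unfolding frame_op_def cinner_sum_left cinner_scaleC_left
    by (simp add: cinner_commute[of "F _" f])
  then show ?thesis
    by (simp add: of_real_sum flip: complex_norm_square)
qed

lemma dual_pair_scaled_frame:
  assumes op: "\<And>f. frame_op N F f = complex_of_real A *s f" and A: "A > 0"
  shows "dual_pair N F (\<lambda>i. complex_of_real (1/A) *s F i)"
  unfolding dual_pair_def
proof
  have "(\<Sum>i\<in>{1..N}. (cmod (cinner f (F i)))^2) = A * (cnorm f)^2" for f
  proof -
    have "(\<Sum>i\<in>{1..N}. (cmod (cinner f (F i)))^2) = Re (cinner (frame_op N F f) f)"
      by (simp add: frame_op_cinner_self)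
    also have "\<dots> = A * (cnorm f)^2"
      unfolding op cinner_scaleC_left cnorm_sq by (subst cinner_self_real) simp
    finally show ?thesis .
  qed
  then show "frame N F"
    unfolding frame_def using A by (intro exI[of _ A]) auto
next
  have "(\<Sum>i\<in>{1..N}. cinner f (complex_of_real (1/A) *s F i) *s F i)
      = complex_of_real (1/A) *s frame_op N F f" for f
  proof -
    have "cinner f (complex_of_real (1/A) *s F i) = complex_of_real (1/A) * cinner f (F i)" for i
      by (simp add: cinner_scaleC_right)
    then show ?thesis unfolding frame_op_def by (simp only: vec_scaleC_sum)
  qed
  then show "\<forall>f. f = (\<Sum>i\<in>{1..N}. cinner f (complex_of_real (1/A) *s F i) *s F i)"
    using A by (simp add: op vector_smult_assoc)
qed

lemma sum_powers_root_of_unity: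
  fixes z :: complex
  assumes "z \<noteq> 1" "z ^ N = 1"
  shows "(\<Sum>i\<in>{1..N}. z ^ i) = 0"
proof -
  have "(\<Sum>i<Suc N. z ^ i) = 1"
    using geometric_sum[OF assms(1), of "Suc N"] assms by simp
  moreover have "{..<Suc N} = insert 0 {1..N}" by auto
  ultimately show ?thesis by simp
qed

lemma cis_2pi_ratio_neq_1:
  fixes a b N :: nat
  assumes "a < N" "b < N" "a \<noteq> b"
  shows "cis (2*pi*(real a - real b)/N) \<noteq> 1"
proof
  assume "cis (2*pi*(real a - real b)/N) = 1"
  then have "cos (2*pi*(real a - real b)/N) = 1"
    by (simp add: complex_eq_iff)
  then obtain m :: int where "2*pi*(real a - real b)/N = real_of_int m * 2 * pi"
    by (subst (asm) cos_one_2pi_int) blast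
  then have "real_of_int (int a - int b) = real_of_int (m * int N)"
    using assms by (simp add: nonzero_divide_eq_eq)
  then have diff: "\<bar>m\<bar> * int N = \<bar>int a - int b\<bar>"
    by (simp only: of_int_eq_iff abs_mult)
  then have "\<bar>m\<bar> * int N < int N" using assms by linarith
  moreover have "int N > 0" using assms(1) by simp
  ultimately have "m = 0" by (simp add: mult_less_cancel_right1)
  with diff assms(3) show False by simp
qed

lemma sum_cis_orthogonal:
  fixes a b N :: nat
  assumes "a < N" "b < N"
  shows "(\<Sum>i\<in>{1..N}. cis (2*pi*i*a/N) * cnj (cis (2*pi*i*b/N))) = (if a = b then of_nat N else 0)"
proof (cases "a = b")
  case True
  then show ?thesis by (simp add: cis_cnj cis_mult)
next
  case False
  define z where "z = cis (2*pi*(real a - real b)/N)"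
  have N: "N > 0" using assms by simp
  have terms: "cis (2*pi*i*a/N) * cnj (cis (2*pi*i*b/N)) = z ^ i" for i :: nat
  proof -
    have "cis (2*pi*i*a/N) * cnj (cis (2*pi*i*b/N)) = cis (2*pi*i*a/N - 2*pi*i*b/N)"
      by (simp add: cis_cnj cis_mult)
    also have "2*pi*i*a/N - 2*pi*i*b/N = real i * (2*pi*(real a - real b)/N)"
      using N by (simp add: field_simps)
    also have "cis (real i * (2*pi*(real a - real b)/N)) = z ^ i"
      by (simp only: z_def Complex.DeMoivre)
    finally show ?thesis .
  qed
  have "z ^ N = cis (2*pi*real_of_int (int a - int b))"
    using N by (simp add: z_def Complex.DeMoivre)
  then have "z ^ N = 1"
    by (simp add: cis_multiple_2pi)
  moreover have "z \<noteq> 1"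
    unfolding z_def using assms False by (rule cis_2pi_ratio_neq_1)
  ultimately show ?thesis
    using False sum_powers_root_of_unity by (simp add: terms)
qed

lemma harmonic_frame_exists:
  assumes "CARD('n) \<le> N"
  shows "\<exists>F G :: nat \<Rightarrow> complex ^ 'n. dual_pair N F G \<and>
           (\<forall>i\<in>{1..N}. diag_term F G i = (real CARD('n) / real N)^2)"
proof -
  obtain idx :: "'n \<Rightarrow> nat" where idx: "bij_betw idx UNIV {0..<CARD('n)}"
    using ex_bij_betw_finite_nat[of "UNIV :: 'n set"] by auto
  have idx_less: "idx k < N" for k
    using idx assms unfolding bij_betw_def by (metis atLeastLessThan_iff rangeI order_less_le_trans)
  have idx_eq: "idx k = idx l \<longleftrightarrow> k = l" for k l
    using idx unfolding bij_betw_def inj_on_def by auto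
  have N: "N > 0" using idx_less by (metis not_less0 neq0_conv)
  \<comment> \<open>the harmonic frame: n columns of the N x N Fourier matrix\<close>
  define H :: "nat \<Rightarrow> complex ^ 'n" where "H i = (\<chi> k. cis (2*pi*i*idx k/N))" for i
  have "frame_op N H f $ k = of_nat N * f $ k" for f k
  proof -
    have "frame_op N H f $ k = (\<Sum>l\<in>UNIV. f $ l * (\<Sum>i\<in>{1..N}. H i $ k * cnj (H i $ l)))"
      by (simp add: frame_op_def cinner_def sum_distrib_left mult_ac) (rule sum.swap)
    also have "\<dots> = (\<Sum>l\<in>UNIV. f $ l * (if k = l then of_nat N else 0))"
      using sum_cis_orthogonal[OF idx_less idx_less] by (simp add: H_def idx_eq)
    also have "\<dots> = of_nat N * f $ k"
      by (simp add: if_distrib[of "\<lambda>x. _ * x"] cong: if_cong)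
    finally show ?thesis .
  qed
  then have op: "frame_op N H f = complex_of_real N *s f" for f
    by (simp add: vec_eq_iff)
  define K where "K i = complex_of_real (1/N) *s H i" for i
  have "dual_pair N H K"
    unfolding K_def by (rule dual_pair_scaled_frame[OF op]) (use N in simp)
  moreover have "diag_term H K i = (real CARD('n) / real N)^2" for i
    by (simp add: diag_term_def K_def H_def cinner_scaleC_self cinner_self power2_eq_square norm_divide)
  ultimately show ?thesis by blast
qed

declare optimal_fam.simps(2) [simp del]

lemma mem_optimal_fam_Suc:
  fixes F :: "nat \<Rightarrow> complex ^ 'n"
  shows "(F, G) \<in> optimal_fam N (Suc m) \<longleftrightarrow>
    (F, G) \<in> optimal_fam N m \<and>
    eps N (Suc m) F G = Inf ((\<lambda>(F, G). eps N (Suc m) F G) ` (optimal_fam N m :: ((nat \<Rightarrow> complex ^ 'n) \<times> _) set))"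
  by (simp add: optimal_fam.simps(2))

lemma diag_term_eq_if_eps_1_le:
  fixes F :: "nat \<Rightarrow> complex ^ 'n"
  assumes "dual_pair N F G" "eps N 1 F G \<le> real CARD('n) / real N" "i \<in> {1..N}"
  shows "diag_term F G i = (real CARD('n) / real N)^2"
proof -
  let ?q = "real CARD('n) / real N"
  have le: "sqrt (diag_term F G j) \<le> ?q" if "j \<in> {1..N}" for j
    using eps_ge[of "{j}" N 1 F G] that assms(2) by (simp add: Re_erasure_hs_singleton)
  have "(\<Sum>j\<in>{1..N}. ?q) = real CARD('n)" using assms(3) by simp
  also have "\<dots> = (\<Sum>j\<in>{1..N}. Re (cinner (F j) (G j)))"
    using dual_pair_trace[OF assms(1)] by (simp flip: Re_sum)
  also have "\<dots> \<le> (\<Sum>j\<in>{1..N}. sqrt (diag_term F G j))"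
    by (rule sum_mono, rule Re_cinner_le_sqrt_diag_term)
  finally have "sqrt (diag_term F G i) = ?q"
    by (intro eq_const_if_le_and_sum_ge[OF _ le _ assms(3)]) auto
  then show ?thesis
    using diag_term_nonneg[of F G i] by (metis real_sqrt_pow2)
qed

lemma eps_1_eq_if_diag_term:
  assumes "1 \<le> N" "\<And>i. i \<in> {1..N} \<Longrightarrow> diag_term F G i = q^2" "q \<ge> 0"
  shows "eps N 1 F G = q"
proof (rule antisym)
  have "Re (erasure_hs L F G) = q^2" if "L \<subseteq> {1..N}" "card L = 1" for L
    using that assms(2) by (auto simp: card_1_singleton_iff Re_erasure_hs_singleton)
  then show "eps N 1 F G \<le> q"
    using assms(1,3) by (intro eps_le[of "{1}"]) auto
  show "q \<le> eps N 1 F G"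
    using eps_ge[of "{1}" N 1 F G] assms by (simp add: Re_erasure_hs_singleton)
qed

lemma Inf_eps_1:
  assumes "CARD('n) \<le> N"
  shows "Inf ((\<lambda>(F, G). eps N 1 F G) ` (optimal_fam N 0 :: ((nat \<Rightarrow> complex ^ 'n) \<times> _) set))
    = real CARD('n) / real N" (is "Inf ?E = ?q")
proof (rule cInf_eq_minimum)
  have N: "1 \<le> N" using assms zero_less_card_finite[where 'a = 'n] by linarith
  obtain H K :: "nat \<Rightarrow> complex ^ 'n" where HK: "dual_pair N H K"
    "\<forall>i\<in>{1..N}. diag_term H K i = (real CARD('n) / real N)^2"
    using harmonic_frame_exists[OF assms] by blast
  then have "eps N 1 H K = real CARD('n) / real N"
    using N by (intro eps_1_eq_if_diag_term) auto
  with HK(1) show "?q \<in> ?E"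
    unfolding image_iff by (intro bexI[of _ "(H, K)"]) auto
  show "?q \<le> x" if "x \<in> ?E" for x
    using that dual_pair_eps_1_ge N by auto
qed

lemma optimal_fam_1_iff:
  fixes F :: "nat \<Rightarrow> complex ^ 'n"
  assumes "CARD('n) \<le> N"
  shows "(F, G) \<in> optimal_fam N 1 \<longleftrightarrow>
    dual_pair N F G \<and> (\<forall>i\<in>{1..N}. diag_term F G i = (real CARD('n) / real N)^2)"
proof -
  have N: "1 \<le> N" using assms zero_less_card_finite[where 'a = 'n] by linarith
  have "(F, G) \<in> optimal_fam N 1 \<longleftrightarrow> dual_pair N F G \<and> eps N 1 F G = real CARD('n) / real N"
    using mem_optimal_fam_Suc[of F G N 0] Inf_eps_1[OF assms] by simp
  moreover have "eps N 1 F G = real CARD('n) / real N"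
    if "\<forall>i\<in>{1..N}. diag_term F G i = (real CARD('n) / real N)^2"
    using N that by (intro eps_1_eq_if_diag_term) auto
  ultimately show ?thesis
    using diag_term_eq_if_eps_1_le[of N F G] by auto
qed

section \<open>The second and higher optimal families\<close>

definition offdiag :: "nat \<Rightarrow> (nat \<times> nat) set" where
  "offdiag N = {(i, j). i \<in> {1..N} \<and> j \<in> {1..N} \<and> i \<noteq> j}"

definition offdiag_const :: "nat \<Rightarrow> (nat \<Rightarrow> nat \<Rightarrow> 'a) \<Rightarrow> bool" where
  "offdiag_const N h \<longleftrightarrow> (\<exists>c. \<forall>i\<in>{1..N}. \<forall>j\<in>{1..N}. i \<noteq> j \<longrightarrow> h i j = c)"

lemma finite_offdiag: "finite (offdiag N)"
  by (rule finite_subset[of _ "{1..N} \<times> {1..N}"]) (auto simp: offdiag_def)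

lemma offdiag_nonempty: "2 \<le> N \<Longrightarrow> offdiag N \<noteq> {}"
proof -
  assume "2 \<le> N"
  then have "(1, 2) \<in> offdiag N" by (simp add: offdiag_def)
  then show ?thesis by blast
qed

lemma sum_offdiag: "(\<Sum>(i, j)\<in>offdiag N. f i j) = (\<Sum>i\<in>{1..N}. \<Sum>j\<in>{1..N}-{i}. f i j)"
proof -
  have "offdiag N = Sigma {1..N} (\<lambda>i. {1..N}-{i})"
    by (auto simp: offdiag_def)
  then show ?thesis by (simp add: sum.Sigma)
qed

lemma offdiag_const_iff: "offdiag_const N h \<longleftrightarrow> (\<exists>c. \<forall>(i, j)\<in>offdiag N. h i j = c)"
  by (auto simp: offdiag_const_def offdiag_def)

lemma offdiag_const_comp_inj_iff:
  assumes "inj_on \<phi> D" "\<forall>i\<in>{1..N}. \<forall>j\<in>{1..N}. h i j \<in> D"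
  shows "offdiag_const N (\<lambda>i j. \<phi> (h i j)) \<longleftrightarrow> offdiag_const N h"
proof -
  have "(\<exists>c. \<forall>p\<in>offdiag N. \<phi> (case_prod h p) = c) \<longleftrightarrow> (\<exists>c. \<forall>p\<in>offdiag N. case_prod h p = c)"
    using assms by (intro ex_const_comp_inj_iff[of \<phi> D]) (auto simp: offdiag_def)
  then show ?thesis
    unfolding offdiag_const_iff by (simp add: case_prod_unfold)
qed

lemma cross_term_sum_optimal_1:
  fixes F :: "nat \<Rightarrow> complex ^ 'n"
  assumes "CARD('n) \<le> N" "(F, G) \<in> optimal_fam N 1"
  shows "(\<Sum>(i, j)\<in>offdiag N. cross_term F G i j) = real CARD('n) - real N * (real CARD('n) / real N)^2"
proof -
  have "dual_pair N F G \<and> (\<forall>i\<in>{1..N}. diag_term F G i = (real CARD('n) / real N)^2)"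
    using assms(2) unfolding optimal_fam_1_iff[OF assms(1)] .
  then have "real CARD('n) = Re (erasure_hs {1..N} F G)"
    and "(\<Sum>i\<in>{1..N}. diag_term F G i) = real N * (real CARD('n) / real N)^2"
    using dual_pair_Re_erasure_hs_all[of N F G] by auto
  then show ?thesis
    using Re_erasure_hs[of "{1..N}" F G] by (simp add: sum_offdiag)
qed

lemma Re_erasure_hs_pair_optimal_1:
  fixes F :: "nat \<Rightarrow> complex ^ 'n"
  assumes "CARD('n) \<le> N" "(F, G) \<in> optimal_fam N 1" "(i, j) \<in> offdiag N"
  shows "Re (erasure_hs {i, j} F G) = 2 * (real CARD('n) / real N)^2 + 2 * cross_term F G i j"
proof -
  have "\<forall>i\<in>{1..N}. diag_term F G i = (real CARD('n) / real N)^2"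
    using assms(2) optimal_fam_1_iff[OF assms(1)] by blast
  then show ?thesis
    using assms(3) Re_erasure_hs_doubleton[of i j F G] by (auto simp: offdiag_def)
qed

lemma eps_2_ge_if_cross_term_mean:
  fixes F :: "nat \<Rightarrow> complex ^ 'n"
  assumes "CARD('n) \<le> N" "2 \<le> N" "(F, G) \<in> optimal_fam N 1"
    and mean: "(\<Sum>(i, j)\<in>offdiag N. cross_term F G i j) = (\<Sum>(i, j)\<in>offdiag N. c)"
  shows "sqrt (2 * (real CARD('n) / real N)^2 + 2 * c) \<le> eps N 2 F G"
proof -
  obtain i j where ij: "(i, j) \<in> offdiag N" "c \<le> cross_term F G i j"
    using ex_ge_if_sum_eq[OF finite_offdiag offdiag_nonempty[OF assms(2)],
          where f = "\<lambda>(i, j). cross_term F G i j" and c = c]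
      mean by (auto simp: case_prod_unfold)
  then have "{i, j} \<subseteq> {1..N}" "card {i, j} = 2"
    by (auto simp: offdiag_def)
  then have "sqrt (Re (erasure_hs {i, j} F G)) \<le> eps N 2 F G"
    by (rule eps_ge)
  moreover have "sqrt (2 * (real CARD('n) / real N)^2 + 2 * c) \<le> sqrt (Re (erasure_hs {i, j} F G))"
    using Re_erasure_hs_pair_optimal_1[OF assms(1,3) ij(1)] ij(2) by simp
  ultimately show ?thesis by linarith
qed

lemma eps_2_eq_iff_cross_term_const:
  fixes F :: "nat \<Rightarrow> complex ^ 'n"
  assumes "CARD('n) \<le> N" "2 \<le> N" "(F, G) \<in> optimal_fam N 1"
    and mean: "(\<Sum>(i, j)\<in>offdiag N. cross_term F G i j) = (\<Sum>(i, j)\<in>offdiag N. c)"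
  shows "eps N 2 F G = sqrt (2 * (real CARD('n) / real N)^2 + 2 * c)
    \<longleftrightarrow> (\<forall>(i, j)\<in>offdiag N. cross_term F G i j = c)"
    (is "_ = ?v \<longleftrightarrow> _")
proof
  assume eps: "eps N 2 F G = ?v"
  have le: "(\<lambda>(i, j). cross_term F G i j) p \<le> c" if "p \<in> offdiag N" for p
  proof -
    obtain i j where p: "p = (i, j)" by fastforce
    have "{i, j} \<subseteq> {1..N}" "card {i, j} = 2"
      using that p by (auto simp: offdiag_def)
    then have "sqrt (Re (erasure_hs {i, j} F G)) \<le> ?v"
      unfolding eps[symmetric] by (rule eps_ge)
    then show ?thesis
      using Re_erasure_hs_pair_optimal_1[OF assms(1,3), of i j] that p by simp
  qed
  have "(\<lambda>(i, j). cross_term F G i j) p = c" if "p \<in> offdiag N" for p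
    using eq_const_if_le_and_sum_ge[where f = "\<lambda>(i, j). cross_term F G i j", OF finite_offdiag le _ that]
      mean by simp
  then show "\<forall>(i, j)\<in>offdiag N. cross_term F G i j = c"
    by auto
next
  assume const: "\<forall>(i, j)\<in>offdiag N. cross_term F G i j = c"
  have "eps N 2 F G \<le> ?v"
  proof (rule eps_le[of "{1, 2}"])
    fix L assume L: "L \<subseteq> {1..N}" "card L = 2"
    then obtain i j where "i \<noteq> j" "L = {i, j}"
      by (meson card_2_iff)
    with L have "L = {i, j}" "(i, j) \<in> offdiag N"
      by (auto simp: offdiag_def)
    then show "sqrt (Re (erasure_hs L F G)) \<le> ?v"
      using Re_erasure_hs_pair_optimal_1[OF assms(1,3), of i j] const by auto
  qed (use assms(2) in auto)
  then show "eps N 2 F G = ?v"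
    using eps_2_ge_if_cross_term_mean[OF assms] by simp
qed

lemma cross_term_const_optimal_1_unique:
  fixes F F' :: "nat \<Rightarrow> complex ^ 'n"
  assumes "CARD('n) \<le> N" "2 \<le> N" "(F, G) \<in> optimal_fam N 1" "(F', G') \<in> optimal_fam N 1"
    and "\<forall>(i, j)\<in>offdiag N. cross_term F G i j = d" "\<forall>(i, j)\<in>offdiag N. cross_term F' G' i j = c"
  shows "d = c"
proof -
  have "(\<Sum>(i, j)\<in>offdiag N. d) = (\<Sum>(i, j)\<in>offdiag N. c)"
  proof -
    have "(\<Sum>(i, j)\<in>offdiag N. d) = (\<Sum>(i, j)\<in>offdiag N. cross_term F G i j)"
      using assms(5) by (intro sum.cong) auto
    also have "\<dots> = (\<Sum>(i, j)\<in>offdiag N. cross_term F' G' i j)"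
      using cross_term_sum_optimal_1[OF assms(1,3)] cross_term_sum_optimal_1[OF assms(1,4)] by simp
    also have "\<dots> = (\<Sum>(i, j)\<in>offdiag N. c)"
      using assms(6) by (intro sum.cong) auto
    finally show ?thesis .
  qed
  then show ?thesis
    using offdiag_nonempty[OF assms(2)] finite_offdiag[of N] by simp
qed

lemma optimal_fam_2_iff:
  fixes F F' :: "nat \<Rightarrow> complex ^ 'n"
  assumes N: "CARD('n) \<le> N" "2 \<le> N"
    and ref: "(F', G') \<in> optimal_fam N 1" "\<forall>(i, j)\<in>offdiag N. cross_term F' G' i j = c"
  shows "(F, G) \<in> optimal_fam N 2 \<longleftrightarrow>
    (F, G) \<in> optimal_fam N 1 \<and> (\<forall>(i, j)\<in>offdiag N. cross_term F G i j = c)"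
proof -
  have mean: "(\<Sum>(i, j)\<in>offdiag N. cross_term F1 G1 i j) = (\<Sum>(i, j)\<in>offdiag N. c)"
    if "(F1, G1) \<in> optimal_fam N 1" for F1 :: "nat \<Rightarrow> complex ^ 'n" and G1
  proof -
    have "(\<Sum>(i, j)\<in>offdiag N. c) = (\<Sum>(i, j)\<in>offdiag N. cross_term F' G' i j)"
      using ref(2) by (intro sum.cong) auto
    then show ?thesis
      using cross_term_sum_optimal_1[OF N(1) that] cross_term_sum_optimal_1[OF N(1) ref(1)] by simp
  qed
  define v where "v = sqrt (2 * (real CARD('n) / real N)^2 + 2 * c)"
  let ?E = "(\<lambda>(F, G). eps N 2 F G) ` (optimal_fam N 1 :: ((nat \<Rightarrow> complex ^ 'n) \<times> _) set)"
  have "Inf ?E = v"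
  proof (rule cInf_eq_minimum)
    show "v \<in> ?E"
      using eps_2_eq_iff_cross_term_const[OF N ref(1) mean[OF ref(1)]] ref
      unfolding image_iff v_def by (intro bexI[of _ "(F', G')"]) auto
    show "v \<le> x" if "x \<in> ?E" for x
      using that eps_2_ge_if_cross_term_mean[OF N _ mean] unfolding v_def by auto
  qed
  then have "(F, G) \<in> optimal_fam N 2 \<longleftrightarrow> (F, G) \<in> optimal_fam N 1 \<and> eps N 2 F G = v"
    using mem_optimal_fam_Suc[of F G N 1] by (simp add: numeral_2_eq_2)
  moreover have "eps N 2 F G = v \<longleftrightarrow> (\<forall>(i, j)\<in>offdiag N. cross_term F G i j = c)"
    if "(F, G) \<in> optimal_fam N 1"
    using eps_2_eq_iff_cross_term_const[OF N that mean[OF that]] unfolding v_def .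
  ultimately show ?thesis by auto
qed

lemma optimal_fam_eq_2:
  fixes F' :: "nat \<Rightarrow> complex ^ 'n"
  assumes N: "CARD('n) \<le> N" "2 \<le> N"
    and ref: "(F', G') \<in> optimal_fam N 1" "\<forall>(i, j)\<in>offdiag N. cross_term F' G' i j = c"
    and "2 \<le> m"
  shows "(optimal_fam N m :: ((nat \<Rightarrow> complex ^ 'n) \<times> _) set) = optimal_fam N 2"
  using \<open>2 \<le> m\<close>
proof (induction m rule: nat_induct_at_least)
  case (Suc m)
  have ref2: "(F', G') \<in> optimal_fam N 2"
    using optimal_fam_2_iff[OF N ref, of F' G'] ref by simp
  have same: "eps N k F G = eps N k F' G'"
    if "(F, G) \<in> optimal_fam N 2" for k and F :: "nat \<Rightarrow> complex ^ 'n" and G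
  proof (rule eps_cong_terms)
    have "(F, G) \<in> optimal_fam N 1" and cross: "\<forall>(i, j)\<in>offdiag N. cross_term F G i j = c"
      using that optimal_fam_2_iff[OF N ref, of F G] by simp_all
    then show "diag_term F G i = diag_term F' G' i" if "i \<in> {1..N}" for i
      using that optimal_fam_1_iff[OF N(1), of F G] optimal_fam_1_iff[OF N(1), of F' G'] ref(1) by simp
    show "cross_term F G i j = cross_term F' G' i j" if "i \<in> {1..N}" "j \<in> {1..N}" "i \<noteq> j" for i j
      using that cross ref(2) by (simp add: offdiag_def)
  qed
  let ?E = "(\<lambda>(F, G). eps N (Suc m) F G) ` (optimal_fam N m :: ((nat \<Rightarrow> complex ^ 'n) \<times> _) set)"
  have "Inf ?E = eps N (Suc m) F' G'"
  proof (rule cInf_eq_minimum)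
    show "eps N (Suc m) F' G' \<in> ?E"
      unfolding Suc.IH image_iff using ref2 by (intro bexI[of _ "(F', G')"]) simp_all
    show "eps N (Suc m) F' G' \<le> x" if "x \<in> ?E" for x
      using that same unfolding Suc.IH by auto
  qed
  then show ?case
    using same by (auto simp: mem_optimal_fam_Suc Suc.IH)
qed simp

lemma optimal_fam_all_iff:
  fixes F F' :: "nat \<Rightarrow> complex ^ 'n"
  assumes N: "CARD('n) \<le> N"
    and ref: "(F', G') \<in> optimal_fam N 1" "offdiag_const N (cross_term F' G')"
  shows "(\<forall>m\<in>{1..N}. (F, G) \<in> optimal_fam N m) \<longleftrightarrow>
    (F, G) \<in> optimal_fam N 1 \<and> offdiag_const N (cross_term F G)"
proof (cases "2 \<le> N")
  case False
  then have "N = 1"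
    using N zero_less_card_finite[where 'a = 'n] by linarith
  then show ?thesis
    by (simp add: offdiag_const_def)
next
  case True
  obtain c where c: "\<forall>(i, j)\<in>offdiag N. cross_term F' G' i j = c"
    using ref(2) by (auto simp: offdiag_const_iff)
  note opt2 = optimal_fam_2_iff[OF N True ref(1) c, of F G]
  show ?thesis
  proof
    assume "\<forall>m\<in>{1..N}. (F, G) \<in> optimal_fam N m"
    then have "(F, G) \<in> optimal_fam N 2"
      using True by simp
    then show "(F, G) \<in> optimal_fam N 1 \<and> offdiag_const N (cross_term F G)"
      unfolding opt2 offdiag_const_iff by blast
  next
    assume opt1: "(F, G) \<in> optimal_fam N 1 \<and> offdiag_const N (cross_term F G)"
    then obtain d where d: "\<forall>(i, j)\<in>offdiag N. cross_term F G i j = d"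
      by (auto simp: offdiag_const_iff)
    then have "d = c"
      using cross_term_const_optimal_1_unique[OF N True _ ref(1) _ c] opt1 by blast
    then have "(F, G) \<in> optimal_fam N 2"
      unfolding opt2 using opt1 d by blast
    moreover have "m = 1 \<or> 2 \<le> m" if "m \<in> {1..N}" for m
      using that by auto
    ultimately show "\<forall>m\<in>{1..N}. (F, G) \<in> optimal_fam N m"
      using opt1 optimal_fam_eq_2[OF N True ref(1) c] by blast
  qed
qed

section \<open>Tight frames and their canonical duals\<close>

lemma linear_eq_0_if_cinner_self_eq_0:
  fixes T :: "complex ^ 'n \<Rightarrow> complex ^ 'n"
  assumes add: "\<And>x y. T (x + y) = T x + T y" and scale: "\<And>c x. T (c *s x) = c *s T x"
    and zero: "\<And>x. cinner (T x) x = 0"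
  shows "T x = 0"
proof -
  have sym: "cinner (T x) y + cinner (T y) x = 0" for x y
  proof -
    have "0 = cinner (T (x + y)) (x + y)" using zero by simp
    also have "\<dots> = cinner (T x) x + cinner (T x) y + cinner (T y) x + cinner (T y) y"
      by (simp add: add cinner_add_left cinner_add_right)
    finally show ?thesis using zero[of x] zero[of y] by simp
  qed
  have antisym: "cinner (T x) y - cinner (T y) x = 0" for x y
  proof -
    have "0 = cinner (T x) (\<i> *s y) + cinner (T (\<i> *s y)) x" by (rule sym[symmetric])
    also have "\<dots> = - \<i> * cinner (T x) y + \<i> * cinner (T y) x"
      by (simp add: scale cinner_scaleC_left cinner_scaleC_right)
    finally have "\<i> * (cinner (T x) y - cinner (T y) x) = 0" by (simp add: algebra_simps)
    then show ?thesis by simp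
  qed
  have "2 * cinner (T x) (T x) = 0"
    using sym[of x "T x"] antisym[of x "T x"] by (simp add: algebra_simps)
  then show ?thesis
    by (simp add: cinner_self_eq_0)
qed

lemma tight_frame_op:
  assumes "tight_frame N F"
  shows "\<exists>A>0. \<forall>f. frame_op N F f = complex_of_real A *s f"
proof -
  obtain A where A: "A > 0" "\<And>f. (\<Sum>i\<in>{1..N}. (cmod (cinner f (F i)))^2) = A * (cnorm f)^2"
    using assms unfolding tight_frame_def by blast
  let ?T = "\<lambda>f. frame_op N F f - complex_of_real A *s f"
  have "cinner (?T f) f = 0" for f
  proof -
    have "cinner (frame_op N F f) f = complex_of_real (A * Re (cinner f f))"
      unfolding frame_op_cinner_self A(2) cnorm_sq ..
    also have "\<dots> = complex_of_real A * cinner f f"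
      by (subst (2) cinner_self_real) simp
    finally show ?thesis
      by (simp add: cinner_diff_left cinner_scaleC_left)
  qed
  moreover have "?T (x + y) = ?T x + ?T y" for x y
    by (simp add: frame_op_def cinner_add_left vector_sadd_rdistrib sum.distrib vector_add_ldistrib)
  moreover have "?T (c *s x) = c *s ?T x" for c x
    by (simp add: frame_op_def cinner_scaleC_left vec_scaleC_sum vector_smult_assoc
        vector_ssub_ldistrib mult.commute)
  ultimately have "?T f = 0" for f
    by (intro linear_eq_0_if_cinner_self_eq_0)
  then show ?thesis
    using A(1) by auto
qed

lemma canon_dual_scalar_frame_op:
  assumes "\<And>f. frame_op N F f = complex_of_real A *s f" "A > 0"
  shows "canon_dual N F = (\<lambda>i. complex_of_real (1/A) *s F i)"
proof -
  have op: "frame_op N F = (\<lambda>f. complex_of_real A *s f)"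
    using assms(1) by (rule ext)
  have inv: "inv (\<lambda>f. complex_of_real A *s f) = (\<lambda>f::complex ^ 'n. complex_of_real (1/A) *s f)"
    using assms(2) by (intro inv_unique_comp) (auto simp: vector_smult_assoc fun_eq_iff)
  show ?thesis
    unfolding canon_dual_def op inv ..
qed

lemma tight_frame_canon_dual:
  assumes "tight_frame N F"
  obtains a where "a > 0" "canon_dual N F = (\<lambda>i. complex_of_real a *s F i)"
    "dual_pair N F (\<lambda>i. complex_of_real a *s F i)"
proof -
  obtain A where "A > 0" and op: "\<And>f. frame_op N F f = complex_of_real A *s f"
    using tight_frame_op[OF assms] by blast
  show ?thesis
  proof (rule that)
    show "1/A > 0" using \<open>A > 0\<close> by simp
  qed (use canon_dual_scalar_frame_op[OF op \<open>A > 0\<close>] dual_pair_scaled_frame[OF op \<open>A > 0\<close>] in auto)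
qed

lemma equal_norm_iff_cinner_self: "equal_norm N F \<longleftrightarrow> (\<exists>c. \<forall>i\<in>{1..N}. Re (cinner (F i) (F i)) = c)"
  unfolding equal_norm_def cnorm_def
  by (rule ex_const_comp_inj_iff[of sqrt "{0..}"]) (auto intro: inj_onI simp: cinner_self_nonneg)

lemma equiangular_iff: "equiangular N F \<longleftrightarrow> equal_norm N F \<and> offdiag_const N (\<lambda>i j. cmod (cinner (F i) (F j)))"
  by (simp add: equiangular_def offdiag_const_def)

lemma cinner_scaled_self: "cinner (F i) (complex_of_real a *s F i) = complex_of_real (a * Re (cinner (F i) (F i)))"
  by (simp add: cinner_scaleC_right) (metis cinner_self_real)

lemma cross_product_scaled:
  "cinner (F i) (complex_of_real a *s F j) * cinner (F j) (complex_of_real a *s F i)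
    = complex_of_real ((a * cmod (cinner (F i) (F j)))^2)"
proof -
  have "cinner (F i) (complex_of_real a *s F j) * cinner (F j) (complex_of_real a *s F i)
      = complex_of_real (a^2) * (cinner (F i) (F j) * cnj (cinner (F i) (F j)))"
    by (simp add: cinner_scaleC_right cinner_commute[of "F j" "F i"] power2_eq_square mult_ac)
  also have "\<dots> = complex_of_real (a^2) * complex_of_real ((cmod (cinner (F i) (F j)))^2)"
    by (simp only: complex_norm_square)
  finally show ?thesis
    by (simp add: power_mult_distrib)
qed

lemma diag_term_scaled: "diag_term F (\<lambda>i. complex_of_real a *s F i) i = (a * Re (cinner (F i) (F i)))^2"
  by (simp add: diag_term_def cinner_scaleC_self power2_eq_square)

lemma cross_term_scaled:
  "cross_term F (\<lambda>i. complex_of_real a *s F i) i j = (a * cmod (cinner (F i) (F j)))^2"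
proof -
  have "cinner (complex_of_real a *s F i) (complex_of_real a *s F j) * cinner (F j) (F i)
      = cinner (F i) (complex_of_real a *s F j) * cinner (F j) (complex_of_real a *s F i)"
    by (simp add: cinner_scaleC_left cinner_scaleC_right mult_ac)
  then show ?thesis
    unfolding cross_term_def cross_product_scaled by simp
qed

lemma one_uniform_scaled_iff:
  assumes "a \<noteq> 0"
  shows "one_uniform N F (\<lambda>i. complex_of_real a *s F i) \<longleftrightarrow> equal_norm N F"
  unfolding one_uniform_def cinner_scaled_self equal_norm_iff_cinner_self
  by (rule ex_const_comp_inj_iff[of "\<lambda>x. complex_of_real (a * x)" UNIV]) (use assms in \<open>auto intro: inj_onI\<close>)

lemma inj_on_scaled_square: "a \<noteq> 0 \<Longrightarrow> inj_on (\<lambda>x. (a * x)^2) {0::real..}"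
  by (rule inj_onI) (simp add: power_mult_distrib power2_eq_iff_nonneg)

lemma offdiag_const_cross_term_scaled_iff:
  assumes "a \<noteq> 0"
  shows "offdiag_const N (cross_term F (\<lambda>i. complex_of_real a *s F i))
    \<longleftrightarrow> offdiag_const N (\<lambda>i j. cmod (cinner (F i) (F j)))"
  unfolding cross_term_scaled
  by (rule offdiag_const_comp_inj_iff[OF inj_on_scaled_square[OF assms]]) simp

lemma two_uniform_scaled_iff:
  assumes "a \<noteq> 0"
  shows "two_uniform N F (\<lambda>i. complex_of_real a *s F i) \<longleftrightarrow>
    dual_pair N F (\<lambda>i. complex_of_real a *s F i) \<and> equal_norm N F
    \<and> offdiag_const N (\<lambda>i j. cmod (cinner (F i) (F j)))"
proof -
  have "inj_on (\<lambda>x. complex_of_real ((a * x)^2)) {0..}"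
    using inj_on_scaled_square[OF assms] unfolding inj_on_def of_real_eq_iff .
  then have "offdiag_const N (\<lambda>i j. complex_of_real ((a * cmod (cinner (F i) (F j)))^2))
      \<longleftrightarrow> offdiag_const N (\<lambda>i j. cmod (cinner (F i) (F j)))"
    by (rule offdiag_const_comp_inj_iff) simp
  then show ?thesis
    unfolding two_uniform_def one_uniform_scaled_iff[OF assms] cross_product_scaled
    by (simp add: offdiag_const_def)
qed

lemma optimal_fam_1_scaled_iff:
  fixes F :: "nat \<Rightarrow> complex ^ 'n"
  assumes N: "CARD('n) \<le> N" and "a > 0" and dual: "dual_pair N F (\<lambda>i. complex_of_real a *s F i)"
  shows "(F, \<lambda>i. complex_of_real a *s F i) \<in> optimal_fam N 1 \<longleftrightarrow> equal_norm N F"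
proof -
  define q where "q = real CARD('n) / real N"
  define s where "s i = Re (cinner (F i) (F i))" for i
  have "1 \<le> N" using N zero_less_card_finite[where 'a = 'n] by linarith
  have s: "s i \<ge> 0" for i by (simp add: s_def cinner_self_nonneg)
  have "complex_of_real (\<Sum>i\<in>{1..N}. a * s i) = of_nat CARD('n)"
    using dual_pair_trace[OF dual] by (simp add: cinner_scaled_self s_def of_real_sum)
  then have trace: "(\<Sum>i\<in>{1..N}. a * s i) = real CARD('n)"
    by (metis of_real_eq_iff of_real_of_nat_eq)
  have "(F, \<lambda>i. complex_of_real a *s F i) \<in> optimal_fam N 1 \<longleftrightarrow> (\<forall>i\<in>{1..N}. (a * s i)^2 = q^2)"
    unfolding optimal_fam_1_iff[OF N] using dual by (simp add: diag_term_scaled s_def q_def)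
  also have "\<dots> \<longleftrightarrow> (\<forall>i\<in>{1..N}. a * s i = q)"
    using \<open>a > 0\<close> s by (simp add: power2_eq_iff_nonneg q_def)
  also have "\<dots> \<longleftrightarrow> (\<forall>i\<in>{1..N}. s i = q / a)"
    using \<open>a > 0\<close> by (simp add: eq_divide_eq mult.commute)
  also have "\<dots> \<longleftrightarrow> (\<exists>c. \<forall>i\<in>{1..N}. s i = c)"
  proof
    assume "\<exists>c. \<forall>i\<in>{1..N}. s i = c"
    then obtain c where c: "\<forall>i\<in>{1..N}. s i = c" by blast
    then have "real N * (a * c) = real CARD('n)"
      using trace by simp
    then show "\<forall>i\<in>{1..N}. s i = q / a"
      using c \<open>a > 0\<close> \<open>1 \<le> N\<close> by (simp add: q_def field_simps)
  qed blast
  finally show ?thesis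
    by (simp add: equal_norm_iff_cinner_self s_def)
qed

theorem theorem3p6:
  fixes N :: nat and F :: "nat \<Rightarrow> complex ^ 'n"
  assumes "CARD('n) \<le> N"
    and "tight_frame N F"
    and "\<exists>(F'::nat \<Rightarrow> complex ^ 'n) (G'::nat \<Rightarrow> complex ^ 'n) (c::real). (F', G') \<in> optimal_fam N 1 \<and>
           (\<forall>i\<in>{1..N}. \<forall>j\<in>{1..N}. i \<noteq> j \<longrightarrow>
              Re (cinner (G' i) (G' j) * cinner (F' j) (F' i)) = c)"
  shows "((\<forall>m\<in>{1..N}. (F, canon_dual N F) \<in> optimal_fam N m)
            \<longleftrightarrow> two_uniform N F (canon_dual N F))
       \<and> (two_uniform N F (canon_dual N F) \<longleftrightarrow> equiangular N F)"
proof -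
  obtain F' G' :: "nat \<Rightarrow> complex ^ 'n" where ref: "(F', G') \<in> optimal_fam N 1"
    "offdiag_const N (cross_term F' G')"
    using assms(3) unfolding offdiag_const_def cross_term_def by blast
  obtain a where "a > 0" and canon: "canon_dual N F = (\<lambda>i. complex_of_real a *s F i)"
    and dual: "dual_pair N F (\<lambda>i. complex_of_real a *s F i)"
    using tight_frame_canon_dual[OF assms(2)] by blast
  then have "a \<noteq> 0" by simp
  have "(\<forall>m\<in>{1..N}. (F, canon_dual N F) \<in> optimal_fam N m)
      \<longleftrightarrow> (F, canon_dual N F) \<in> optimal_fam N 1 \<and> offdiag_const N (cross_term F (canon_dual N F))"
    by (rule optimal_fam_all_iff[OF assms(1) ref])
  also have "\<dots> \<longleftrightarrow> equal_norm N F \<and> offdiag_const N (\<lambda>i j. cmod (cinner (F i) (F j)))"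
    unfolding canon optimal_fam_1_scaled_iff[OF assms(1) \<open>a > 0\<close> dual]
      offdiag_const_cross_term_scaled_iff[OF \<open>a \<noteq> 0\<close>] ..
  moreover have "two_uniform N F (canon_dual N F)
      \<longleftrightarrow> equal_norm N F \<and> offdiag_const N (\<lambda>i j. cmod (cinner (F i) (F j)))"
    unfolding canon two_uniform_scaled_iff[OF \<open>a \<noteq> 0\<close>] using dual by simp
  ultimately show ?thesis
    by (simp add: equiangular_iff)
qed

end
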